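(* Let \((Q, \preccurlyeq_{Q})\) be a totally ordered set with a smallest element \(q_0\). Then there is a \(\preccurlyeq_{Q}\)-ultrametric \(d \colon Q^2 \to Q\) such that \(d(Q^2) = Q\) and \(\preccurlyeq_{Q}^{0} = \preccurlyeq_{Q}\), where \(\preccurlyeq_Q^0\) denotes the intersection of all partial orders \(\preccurlyeq\) on \(Q\) for which \(d\) is a \(\preccurlyeq\)-pseudoultrametric.
   Context: For a poset \((P,\preccurlyeq)\) with smallest element \(p_0\) and a nonempty set \(X\), \(d\colon X^2\to P\) is a \(\preccurlyeq\)-pseudoultrametric if \(d\) is symmetric, \(d(x,x)=p_0\) for all \(x\), and for every triple \(\langle x_1,x_2,x_3\rangle\) in \(X\) there is a permutation \((i_1,i_2,i_3)\) of \((1,2,3)\) with \(d(x_{i_1},x_{i_3})\preccurlyeq d(x_{i_1},x_{i_2})\) and \(d(x_{i_1},x_{i_2})=d(x_{i_2},x_{i_3})\) (in particular \((P,\preccurlyeq)\) must have a smallest element); it is a \(\preccurlyeq\)-ultrametric if moreover \(d(x,y)=p_0\) iff \(x=y\). \(d(Q^2)\) denotes the range of \(d\). *)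

theory Defs
  imports Main
begin

definition smallest_elem :: "'a set \<Rightarrow> 'a rel \<Rightarrow> 'a \<Rightarrow> bool" where
  "smallest_elem P r p0 \<longleftrightarrow> p0 \<in> P \<and> (\<forall>p\<in>P. (p0, p) \<in> r)"

definition pseudoultrametric ::
  "'b set \<Rightarrow> 'a set \<Rightarrow> 'a rel \<Rightarrow> ('b \<Rightarrow> 'b \<Rightarrow> 'a) \<Rightarrow> bool" where
  "pseudoultrametric X P r d \<longleftrightarrow>
     X \<noteq> {} \<and> partial_order_on P r \<and>
     (\<forall>x\<in>X. \<forall>y\<in>X. d x y \<in> P) \<and>
     (\<exists>p0. smallest_elem P r p0 \<and>
        (\<forall>x\<in>X. \<forall>y\<in>X. d x y = d y x) \<and>
        (\<forall>x\<in>X. d x x = p0) \<and>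
        (\<forall>x1\<in>X. \<forall>x2\<in>X. \<forall>x3\<in>X.
           \<exists>(a, b, c) \<in> {(x1, x2, x3), (x1, x3, x2), (x2, x1, x3),
                          (x2, x3, x1), (x3, x1, x2), (x3, x2, x1)}.
             (d a c, d a b) \<in> r \<and> d a b = d b c))"

definition ultrametric ::
  "'b set \<Rightarrow> 'a set \<Rightarrow> 'a rel \<Rightarrow> ('b \<Rightarrow> 'b \<Rightarrow> 'a) \<Rightarrow> bool" where
  "ultrametric X P r d \<longleftrightarrow>
     pseudoultrametric X P r d \<and>
     (\<forall>p0. smallest_elem P r p0 \<longrightarrow> (\<forall>x\<in>X. \<forall>y\<in>X. d x y = p0 \<longleftrightarrow> x = y))"

definition minimal_order :: "'a set \<Rightarrow> ('a \<Rightarrow> 'a \<Rightarrow> 'a) \<Rightarrow> 'a rel" where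
  "minimal_order Q d = \<Inter>{R. partial_order_on Q R \<and> pseudoultrametric Q Q R d}"

end

theory Submission
  imports Defs
begin

text \<open>Take \<open>d(x, y) = max(x, y)\<close> for \<open>x \<noteq> y\<close> and \<open>d(x, x) = q\<^sub>0\<close>. In a triple sorted
  as \<open>u \<le> v \<le> w\<close> the two largest distances coincide, so \<open>d\<close> is an ultrametric, and
  \<open>d(q\<^sub>0, q) = q\<close> makes it onto. Conversely, let \<open>d\<close> be a pseudoultrametric for some order
  \<open>\<preceq>\<close>. Then \<open>q\<^sub>0\<close>, being a diagonal value, is \<open>\<preceq>\<close>-smallest, and for
  \<open>q\<^sub>0 < a < b\<close> the triple \<open>(q\<^sub>0, a, b)\<close> has sides \<open>a, b, b\<close>: its
  unique shortest side must lie below the two equal ones, forcing \<open>a \<preceq> b\<close>.\<close>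

definition ultra_triangle :: "'a rel \<Rightarrow> ('b \<Rightarrow> 'b \<Rightarrow> 'a) \<Rightarrow> 'b \<Rightarrow> 'b \<Rightarrow> 'b \<Rightarrow> bool" where
  "ultra_triangle r d x1 x2 x3 \<longleftrightarrow>
     (\<exists>(a, b, c) \<in> {(x1, x2, x3), (x1, x3, x2), (x2, x1, x3),
                    (x2, x3, x1), (x3, x1, x2), (x3, x2, x1)}.
        (d a c, d a b) \<in> r \<and> d a b = d b c)"

lemma pseudoultrametric_iff:
  "pseudoultrametric X P r d \<longleftrightarrow>
     X \<noteq> {} \<and> partial_order_on P r \<and> (\<forall>x\<in>X. \<forall>y\<in>X. d x y \<in> P) \<and>
     (\<exists>p0. smallest_elem P r p0 \<and> (\<forall>x\<in>X. \<forall>y\<in>X. d x y = d y x) \<and> (\<forall>x\<in>X. d x x = p0) \<and>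
        (\<forall>x1\<in>X. \<forall>x2\<in>X. \<forall>x3\<in>X. ultra_triangle r d x1 x2 x3))"
  unfolding pseudoultrametric_def ultra_triangle_def ..

lemma ultra_triangle_swap12:
  "ultra_triangle r d x y z \<longleftrightarrow> ultra_triangle r d y x z"
  unfolding ultra_triangle_def by auto

lemma ultra_triangle_swap23:
  "ultra_triangle r d x y z \<longleftrightarrow> ultra_triangle r d x z y"
  unfolding ultra_triangle_def by auto

lemma smallest_elem_unique:
  assumes "antisym r" "smallest_elem P r p" "smallest_elem P r q"
  shows "p = q"
  using assms by (auto simp: smallest_elem_def dest: antisymD)

lemma pseudoultrametric_diag_smallest:
  assumes "pseudoultrametric X P r d" "x \<in> X"
  shows "smallest_elem P r (d x x)"
  using assms by (auto simp: pseudoultrametric_def)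

lemma pseudoultrametric_isosceles:
  assumes "pseudoultrametric X P r d" "x \<in> X" "y \<in> X" "z \<in> X"
    and "d x z = d y z" "d x y \<noteq> d y z"
  shows "(d x y, d y z) \<in> r"
proof -
  have "ultra_triangle r d x y z" and "\<forall>a\<in>X. \<forall>b\<in>X. d a b = d b a"
    using assms(1-4) by (auto simp: pseudoultrametric_iff)
  then show ?thesis
    using assms(2-6) by (auto simp: ultra_triangle_def)
qed

lemma minimal_order_eqI:
  assumes "pseudoultrametric Q Q r d"
    and "\<And>R. pseudoultrametric Q Q R d \<Longrightarrow> r \<subseteq> R"
  shows "minimal_order Q d = r"
  using assms unfolding minimal_order_def pseudoultrametric_def by blast

definition max_ultrametric :: "'a rel \<Rightarrow> 'a \<Rightarrow> 'a \<Rightarrow> 'a \<Rightarrow> 'a" where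
  "max_ultrametric r q0 x y = (if x = y then q0 else if (x, y) \<in> r then y else x)"

lemma max_ultrametric_less:
  assumes "antisym r" "(x, y) \<in> r" "x \<noteq> y"
  shows "max_ultrametric r q0 x y = y" "max_ultrametric r q0 y x = y"
  using assms by (auto simp: max_ultrametric_def dest: antisymD)

lemma ultra_triangle_max_ultrametric_sorted:
  assumes r: "partial_order_on Q r" and q0: "smallest_elem Q r q0"
    and uv: "(u, v) \<in> r" and vw: "(v, w) \<in> r"
  shows "ultra_triangle r (max_ultrametric r q0) u v w"
proof -
  let ?d = "max_ultrametric r q0"
  have "antisym r" "trans r" "r \<subseteq> Q \<times> Q"
    using r by (auto simp: partial_order_on_def preorder_on_def)
  then have uw: "(u, w) \<in> r" and w: "w \<in> Q" and v: "v \<in> Q"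
    using uv vw by (auto dest: transD)
  have le_q0: "(q0, x) \<in> r" if "x \<in> Q" for x
    using q0 that by (simp add: smallest_elem_def)
  consider "u = v" "v = w" | "u = v" "v \<noteq> w" | "u \<noteq> v" "v = w" | "u \<noteq> v" "v \<noteq> w"
    by blast
  then show ?thesis
  proof cases
    case 1
    then show ?thesis
      using le_q0 q0 by (auto simp: ultra_triangle_def max_ultrametric_def smallest_elem_def)
  next
    case 2
    then have "(?d u v, ?d u w) \<in> r \<and> ?d u w = ?d w v"
      using max_ultrametric_less[OF \<open>antisym r\<close> vw] le_q0 w by (simp add: max_ultrametric_def)
    then show ?thesis by (auto simp: ultra_triangle_def)
  next
    case 3
    then have "(?d w v, ?d w u) \<in> r \<and> ?d w u = ?d u v"
      using max_ultrametric_less[OF \<open>antisym r\<close> uv] le_q0 v by (simp add: max_ultrametric_def)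
    then show ?thesis by (auto simp: ultra_triangle_def)
  next
    case 4
    moreover have "u \<noteq> w"
      using 4 uv vw \<open>antisym r\<close> by (auto dest: antisymD)
    ultimately have "(?d u v, ?d u w) \<in> r \<and> ?d u w = ?d w v"
      using max_ultrametric_less[OF \<open>antisym r\<close>] uv vw uw by simp
    then show ?thesis by (auto simp: ultra_triangle_def)
  qed
qed

lemma ultra_triangle_max_ultrametric:
  assumes r: "linear_order_on Q r" and q0: "smallest_elem Q r q0"
    and "x \<in> Q" "y \<in> Q" "z \<in> Q"
  shows "ultra_triangle r (max_ultrametric r q0) x y z"
proof -
  have po: "partial_order_on Q r" and "total_on Q r" "refl_on Q r"
    using r by (auto simp: linear_order_on_def partial_order_on_def preorder_on_def)
  then have le: "(a, b) \<in> r \<or> (b, a) \<in> r" if "a \<in> Q" "b \<in> Q" for a b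
    using that unfolding total_on_def by (metis refl_onD)
  note sorted = ultra_triangle_max_ultrametric_sorted[OF po q0]
  show ?thesis
    using le[of x y] le[of x z] le[of y z] assms(3-5)
    by (metis sorted ultra_triangle_swap12 ultra_triangle_swap23)
qed

lemma max_ultrametric_commute:
  assumes "linear_order_on Q r" "x \<in> Q" "y \<in> Q"
  shows "max_ultrametric r q0 x y = max_ultrametric r q0 y x"
  using assms
  by (auto simp: max_ultrametric_def linear_order_on_def partial_order_on_def total_on_def
      dest: antisymD)

lemma max_ultrametric_in:
  assumes "smallest_elem Q r q0" "x \<in> Q" "y \<in> Q"
  shows "max_ultrametric r q0 x y \<in> Q"
  using assms by (simp add: max_ultrametric_def smallest_elem_def)

lemma max_ultrametric_eq_smallest_iff:
  assumes "antisym r" "smallest_elem Q r q0" "x \<in> Q" "y \<in> Q"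
  shows "max_ultrametric r q0 x y = q0 \<longleftrightarrow> x = y"
  using assms by (auto simp: max_ultrametric_def smallest_elem_def dest: antisymD)

lemma image_max_ultrametric:
  assumes "smallest_elem Q r q0"
  shows "(\<lambda>(x, y). max_ultrametric r q0 x y) ` (Q \<times> Q) = Q"
proof
  show "(\<lambda>(x, y). max_ultrametric r q0 x y) ` (Q \<times> Q) \<subseteq> Q"
    using assms by (auto intro: max_ultrametric_in)
  have "max_ultrametric r q0 q0 q = q" if "q \<in> Q" for q
    using assms that by (simp add: max_ultrametric_def smallest_elem_def)
  then show "Q \<subseteq> (\<lambda>(x, y). max_ultrametric r q0 x y) ` (Q \<times> Q)"
    using assms by (force simp: smallest_elem_def)
qed

lemma pseudoultrametric_max_ultrametric:
  assumes r: "linear_order_on Q r" and q0: "smallest_elem Q r q0"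
  shows "pseudoultrametric Q Q r (max_ultrametric r q0)"
proof -
  let ?d = "max_ultrametric r q0"
  have "Q \<noteq> {}" "partial_order_on Q r"
    using r q0 by (auto simp: linear_order_on_def smallest_elem_def)
  moreover have "\<forall>x\<in>Q. \<forall>y\<in>Q. ?d x y \<in> Q"
    using q0 by (blast intro: max_ultrametric_in)
  moreover have "\<forall>x\<in>Q. \<forall>y\<in>Q. ?d x y = ?d y x"
    using r by (blast intro: max_ultrametric_commute)
  moreover have "\<forall>x\<in>Q. ?d x x = q0"
    by (simp add: max_ultrametric_def)
  moreover have "\<forall>x\<in>Q. \<forall>y\<in>Q. \<forall>z\<in>Q. ultra_triangle r ?d x y z"
    using r q0 by (blast intro: ultra_triangle_max_ultrametric)
  ultimately show ?thesis
    using q0 unfolding pseudoultrametric_iff by blast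
qed

lemma ultrametric_max_ultrametric:
  assumes r: "linear_order_on Q r" and q0: "smallest_elem Q r q0"
  shows "ultrametric Q Q r (max_ultrametric r q0)"
  unfolding ultrametric_def
proof (intro conjI allI impI ballI)
  show "pseudoultrametric Q Q r (max_ultrametric r q0)"
    using assms by (rule pseudoultrametric_max_ultrametric)
  have "antisym r"
    using r by (simp add: linear_order_on_def partial_order_on_def)
  fix p0 x y assume "smallest_elem Q r p0" "x \<in> Q" "y \<in> Q"
  then show "max_ultrametric r q0 x y = p0 \<longleftrightarrow> x = y"
    using smallest_elem_unique[OF \<open>antisym r\<close> q0]
      max_ultrametric_eq_smallest_iff[OF \<open>antisym r\<close> q0] by simp
qed

lemma subset_if_pseudoultrametric_max_ultrametric:
  assumes r: "linear_order_on Q r" and q0: "smallest_elem Q r q0"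
    and R: "pseudoultrametric Q Q R (max_ultrametric r q0)"
  shows "r \<subseteq> R"
proof
  fix p assume "p \<in> r"
  then obtain a b where p: "p = (a, b)" and ab: "(a, b) \<in> r" by (cases p) auto
  let ?d = "max_ultrametric r q0"
  have "antisym r" "r \<subseteq> Q \<times> Q"
    using r by (auto simp: linear_order_on_def partial_order_on_def preorder_on_def)
  then have a: "a \<in> Q" and b: "b \<in> Q" using ab by auto
  have q0_in: "q0 \<in> Q" using q0 by (simp add: smallest_elem_def)
  have "smallest_elem Q R (?d a a)"
    using pseudoultrametric_diag_smallest[OF R a] .
  then have R_q0: "smallest_elem Q R q0"
    by (simp add: max_ultrametric_def)
  have "refl_on Q R"
    using R by (simp add: pseudoultrametric_def partial_order_on_def preorder_on_def)
  consider "a = q0" | "a = b" | "a \<noteq> q0" "a \<noteq> b" by blast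
  then show "p \<in> R"
  proof cases
    case 1
    then show ?thesis using R_q0 b p by (simp add: smallest_elem_def)
  next
    case 2
    then show ?thesis using \<open>refl_on Q R\<close> b p by (simp add: refl_onD)
  next
    case 3
    have "(q0, a) \<in> r" "(q0, b) \<in> r" using q0 a b by (simp_all add: smallest_elem_def)
    moreover have "b \<noteq> q0" using 3 ab \<open>(q0, a) \<in> r\<close> \<open>antisym r\<close> by (auto dest: antisymD)
    ultimately have "?d q0 a = a" "?d q0 b = b" "?d a b = b"
      using 3 ab max_ultrametric_less[OF \<open>antisym r\<close>] by auto
    then show ?thesis
      using pseudoultrametric_isosceles[OF R q0_in a b] 3 p by auto
  qed
qed

theorem proposition4p7:
  fixes Q :: "'a set" and LQ :: "'a rel" and q0 :: 'a
  assumes "linear_order_on Q LQ"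
    and "smallest_elem Q LQ q0"
  shows "\<exists>d :: 'a \<Rightarrow> 'a \<Rightarrow> 'a.
           ultrametric Q Q LQ d \<and>
           (\<lambda>(x, y). d x y) ` (Q \<times> Q) = Q \<and>
           minimal_order Q d = LQ"
proof (intro exI conjI)
  show "ultrametric Q Q LQ (max_ultrametric LQ q0)"
    using assms by (rule ultrametric_max_ultrametric)
  show "(\<lambda>(x, y). max_ultrametric LQ q0 x y) ` (Q \<times> Q) = Q"
    using assms(2) by (rule image_max_ultrametric)
  show "minimal_order Q (max_ultrametric LQ q0) = LQ"
    by (intro minimal_order_eqI pseudoultrametric_max_ultrametric[OF assms]
        subset_if_pseudoultrametric_max_ultrametric[OF assms])
qed

end
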